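(* Let $p$ be an odd prime and $\mathbf{s}=(s_1,\dots,s_l)$ a tuple of positive integers with $\mathbf{s}=\overline{\mathbf{s}}$ and $|\mathbf{s}|=s_1+\dots+s_l$ odd. Then $H(\mathbf{s};p-1)\equiv S(\mathbf{s};p-1)\equiv0\pmod p$.
   Context: $\overline{\mathbf{s}}=(s_l,\dots,s_1)$. $H(\mathbf{s};N)=\sum_{1\le k_1<\dots<k_l\le N}k_1^{-s_1}\cdots k_l^{-s_l}$, $S(\mathbf{s};N)=\sum_{1\le k_1\le\dots\le k_l\le N}k_1^{-s_1}\cdots k_l^{-s_l}$. Congruences of rationals with denominators prime to $p$ are in the usual $p$-integral sense. *)

theory Defs
  imports Complex_Main "HOL-Computational_Algebra.Primes"
begin

text \<open>A tuple s = (s_1,...,s_l) is a list with s ! (i-1) = s_i.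
  Index tuples (k_1,...,k_l) are lists ks with ks ! (i-1) = k_i.\<close>

definition H :: "nat list \<Rightarrow> nat \<Rightarrow> rat" where
  "H s N = (\<Sum>ks\<in>{ks. length ks = length s \<and> sorted_wrt (<) ks \<and> set ks \<subseteq> {1..N}}.
              \<Prod>i<length s. 1 / (of_nat (ks ! i)) ^ (s ! i))"

definition S :: "nat list \<Rightarrow> nat \<Rightarrow> rat" where
  "S s N = (\<Sum>ks\<in>{ks. length ks = length s \<and> sorted_wrt (\<le>) ks \<and> set ks \<subseteq> {1..N}}.
              \<Prod>i<length s. 1 / (of_nat (ks ! i)) ^ (s ! i))"

definition rat_cong :: "rat \<Rightarrow> rat \<Rightarrow> nat \<Rightarrow> bool" where
  "rat_cong x y p \<longleftrightarrow> (\<exists>a b::int. \<not> int p dvd b \<and> int p dvd a \<and> x - y = of_int a / of_int b)"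

end

theory Submission
  imports Defs "HOL-Number_Theory.Cong"
begin

text \<open>The map \<open>(k\<^sub>1, \<dots>, k\<^sub>l) \<mapsto> (p - k\<^sub>l, \<dots>, p - k\<^sub>1)\<close> is an involution of the index
  set of both \<open>H(s; p - 1)\<close> and \<open>S(s; p - 1)\<close>. Because \<open>s\<close> is a palindrome, it sends the term
  \<open>1 / \<Prod> k\<^sub>i ^ s\<^sub>i\<close> to \<open>1 / \<Prod> (p - k\<^sub>i) ^ s\<^sub>i\<close>, whose denominator is congruent to
  \<open>(-1) ^ |s| \<Prod> k\<^sub>i ^ s\<^sub>i = - \<Prod> k\<^sub>i ^ s\<^sub>i\<close> modulo \<open>p\<close>. So every term plus its image is
  \<open>\<equiv> 0 (mod p)\<close>; hence twice the sum is \<open>\<equiv> 0\<close>, and \<open>p\<close> is odd.\<close>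

lemma rat_cong_0I:
  "\<not> int p dvd b \<Longrightarrow> int p dvd a \<Longrightarrow> x = of_int a / of_int b \<Longrightarrow> rat_cong x 0 p"
  unfolding rat_cong_def by auto

lemma rat_cong_0E:
  assumes "rat_cong x 0 p"
  obtains a b where "\<not> int p dvd b" "int p dvd a" "x = of_int a / of_int b"
  using assms unfolding rat_cong_def by auto

lemma rat_cong_zero: "prime p \<Longrightarrow> rat_cong 0 0 p"
  by (rule rat_cong_0I[of p 1 0]) (auto simp: prime_gt_1_nat)

lemma rat_cong_add:
  assumes "prime p" "rat_cong x 0 p" "rat_cong y 0 p"
  shows "rat_cong (x + y) 0 p"
proof -
  obtain a b where ab: "\<not> int p dvd b" "int p dvd a" "x = of_int a / of_int b"
    using assms(2) by (rule rat_cong_0E)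
  obtain c d where cd: "\<not> int p dvd d" "int p dvd c" "y = of_int c / of_int d"
    using assms(3) by (rule rat_cong_0E)
  have "\<not> int p dvd b * d"
    using ab(1) cd(1) assms(1) by (simp add: prime_dvd_mult_iff)
  moreover have "x + y = of_int (a * d + c * b) / of_int (b * d)"
  proof -
    have "b \<noteq> 0" "d \<noteq> 0" using ab(1) cd(1) by auto
    then show ?thesis using ab(3) cd(3) by (simp add: field_simps)
  qed
  moreover have "int p dvd a * d + c * b"
    using ab(2) cd(2) by simp
  ultimately show ?thesis
    by (intro rat_cong_0I)
qed

lemma rat_cong_sum:
  assumes "prime p" "\<And>x. x \<in> A \<Longrightarrow> rat_cong (f x) 0 p"
  shows "rat_cong (sum f A) 0 p"
  using assms(2)
  by (induction A rule: infinite_finite_induct) (auto simp: rat_cong_zero assms(1) rat_cong_add)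

lemma rat_cong_mult_cancel:
  assumes "prime p" "\<not> int p dvd c" "rat_cong (of_int c * x) 0 p"
  shows "rat_cong x 0 p"
proof -
  obtain a b where ab: "\<not> int p dvd b" "int p dvd a" "of_int c * x = of_int a / of_int b"
    using assms(3) by (rule rat_cong_0E)
  have "\<not> int p dvd c * b"
    using ab(1) assms(1,2) by (simp add: prime_dvd_mult_iff)
  moreover have "x = of_int a / of_int (c * b)"
  proof -
    have "b \<noteq> 0" "c \<noteq> 0" using ab(1) assms(2) by auto
    then show ?thesis using ab(3) by (simp add: field_simps)
  qed
  ultimately show ?thesis
    using ab(2) by (intro rat_cong_0I)
qed

lemma rat_cong_inverse_add:
  fixes A B :: int
  assumes "prime p" "\<not> int p dvd A" "\<not> int p dvd B" "[B = - A] (mod int p)"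
  shows "rat_cong (1 / of_int A + 1 / of_int B) 0 p"
proof (rule rat_cong_0I)
  show "\<not> int p dvd A * B"
    using assms(1-3) by (simp add: prime_dvd_mult_iff)
  show "int p dvd A + B"
    using assms(4) by (simp add: cong_iff_dvd_diff add.commute)
  show "1 / of_int A + 1 / of_int B = (of_int (A + B) / of_int (A * B) :: rat)"
  proof -
    have "A \<noteq> 0" "B \<noteq> 0" using assms(2,3) by auto
    then show ?thesis by (simp add: field_simps)
  qed
qed

definition index_tuples :: "(nat \<Rightarrow> nat \<Rightarrow> bool) \<Rightarrow> nat \<Rightarrow> nat \<Rightarrow> nat list set" where
  "index_tuples R l N = {ks. length ks = l \<and> sorted_wrt R ks \<and> set ks \<subseteq> {1..N}}"

definition index_monomial :: "nat list \<Rightarrow> nat list \<Rightarrow> int" where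
  "index_monomial s ks = (\<Prod>i<length s. int (ks ! i) ^ (s ! i))"

definition multiple_harmonic_sum :: "(nat \<Rightarrow> nat \<Rightarrow> bool) \<Rightarrow> nat list \<Rightarrow> nat \<Rightarrow> rat" where
  "multiple_harmonic_sum R s N =
     (\<Sum>ks\<in>index_tuples R (length s) N. 1 / of_int (index_monomial s ks))"

lemma sum_inverse_power_prod_eq:
  "(\<Sum>ks\<in>index_tuples R (length s) N. \<Prod>i<length s. 1 / (of_nat (ks ! i)) ^ (s ! i)) =
     multiple_harmonic_sum R s N"
  unfolding multiple_harmonic_sum_def index_monomial_def
  by (simp add: prod_dividef)

lemma H_eq_multiple_harmonic_sum: "H s N = multiple_harmonic_sum (<) s N"
  unfolding H_def sum_inverse_power_prod_eq[symmetric] index_tuples_def ..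

lemma S_eq_multiple_harmonic_sum: "S s N = multiple_harmonic_sum (\<le>) s N"
  unfolding S_def sum_inverse_power_prod_eq[symmetric] index_tuples_def ..

lemma index_monomial_rev:
  "length ks = length s \<Longrightarrow> index_monomial s (rev ks) = index_monomial (rev s) ks"
  unfolding index_monomial_def
  by (rule prod.reindex_bij_witness[where i="\<lambda>j. length s - 1 - j" and j="\<lambda>j. length s - 1 - j"])
     (auto simp: rev_nth)

lemma index_monomial_complement_cong:
  assumes "length ks = length s" "\<forall>k\<in>set ks. k \<le> p"
  shows "[index_monomial s (map (\<lambda>k. p - k) ks) = (-1) ^ sum_list s * index_monomial s ks] (mod int p)"
proof -
  have sign: "(\<Prod>i<length s. (-1::int) ^ (s ! i)) = (-1) ^ sum_list s"
    by (simp only: power_sum sum_list_sum_nth atLeast0LessThan)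
  have "[index_monomial s (map (\<lambda>k. p - k) ks) = (\<Prod>i<length s. (- int (ks ! i)) ^ (s ! i))] (mod int p)"
    unfolding index_monomial_def
  proof (intro cong_prod cong_pow)
    fix i assume "i \<in> {..<length s}"
    then have "ks ! i \<le> p" using assms by auto
    then show "[int (map (\<lambda>k. p - k) ks ! i) = - int (ks ! i)] (mod int p)"
      using \<open>i \<in> {..<length s}\<close> assms(1) by (simp add: cong_iff_dvd_diff of_nat_diff)
  qed
  also have "(\<Prod>i<length s. (- int (ks ! i)) ^ (s ! i)) = (-1) ^ sum_list s * index_monomial s ks"
    unfolding sign[symmetric] index_monomial_def prod.distrib[symmetric]
    by (simp add: power_mult_distrib[symmetric])
  finally show ?thesis .
qed

lemma prime_not_dvd_index_monomial:
  assumes "prime p" "ks \<in> index_tuples R (length s) (p - 1)"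
  shows "\<not> int p dvd index_monomial s ks"
proof
  assume "int p dvd index_monomial s ks"
  then obtain i where "i < length s" "int p dvd int (ks ! i) ^ (s ! i)"
    using assms(1) unfolding index_monomial_def by (auto simp: prime_dvd_prod_iff)
  moreover have "prime (int p)"
    using assms(1) by simp
  ultimately have "p dvd ks ! i"
    using prime_dvd_power int_dvd_int_iff by blast
  moreover have "ks ! i \<in> {1..p - 1}"
    using \<open>i < length s\<close> assms(2) unfolding index_tuples_def by (auto simp: subset_iff)
  ultimately show False
    by (auto dest: dvd_imp_le)
qed

definition reflect :: "nat \<Rightarrow> nat list \<Rightarrow> nat list" where
  "reflect p ks = rev (map (\<lambda>k. p - k) ks)"

lemma reflect_reflect: "\<forall>k\<in>set ks. k \<le> p \<Longrightarrow> reflect p (reflect p ks) = ks"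
  unfolding reflect_def by (simp add: rev_map map_idI)

lemma reflect_in_index_tuples:
  assumes "\<And>x y. x \<le> p \<Longrightarrow> y \<le> p \<Longrightarrow> R (p - y) (p - x) = R x y"
    and "ks \<in> index_tuples R l (p - 1)"
  shows "reflect p ks \<in> index_tuples R l (p - 1)"
proof -
  have ks: "length ks = l" "sorted_wrt R ks" "set ks \<subseteq> {1..p - 1}"
    using assms(2) unfolding index_tuples_def by auto
  have "sorted_wrt (\<lambda>x y. R (p - y) (p - x)) ks"
  proof (rule sorted_wrt_mono_rel[where Q="\<lambda>x y. R (p - y) (p - x)", OF _ ks(2)])
    fix x y assume "x \<in> set ks" "y \<in> set ks" "R x y"
    moreover have "x \<le> p" "y \<le> p"
      using subsetD[OF ks(3) \<open>x \<in> set ks\<close>] subsetD[OF ks(3) \<open>y \<in> set ks\<close>] by auto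
    ultimately show "R (p - y) (p - x)"
      using assms(1) by simp
  qed
  moreover have "set (reflect p ks) \<subseteq> {1..p - 1}"
    using ks(3) unfolding reflect_def by (auto simp: subset_iff)
  ultimately show ?thesis
    using ks(1) unfolding index_tuples_def reflect_def
    by (simp add: sorted_wrt_rev sorted_wrt_map)
qed

lemma multiple_harmonic_sum_reflection_cong_0:
  assumes "prime p" "odd p"
    and R: "\<And>x y. x \<le> p \<Longrightarrow> y \<le> p \<Longrightarrow> R (p - y) (p - x) = R x y"
    and "rev s = s" "odd (sum_list s)"
  shows "rat_cong (multiple_harmonic_sum R s (p - 1)) 0 p"
proof -
  define I where "I = index_tuples R (length s) (p - 1)"
  define T where "T = (\<lambda>ks. 1 / (of_int (index_monomial s ks) :: rat))"
  have bounded: "\<forall>k\<in>set ks. k \<le> p" if "ks \<in> I" for ks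
    using that unfolding I_def index_tuples_def by (auto simp: subset_iff)
  have reflect_I: "reflect p ks \<in> I" if "ks \<in> I" for ks
    using that unfolding I_def by (rule reflect_in_index_tuples[rotated]) (simp add: R)
  have pair: "rat_cong (T ks + T (reflect p ks)) 0 p" if "ks \<in> I" for ks
  proof -
    have len: "length ks = length s"
      using that unfolding I_def index_tuples_def by simp
    have "index_monomial s (reflect p ks) = index_monomial s (map (\<lambda>k. p - k) ks)"
      using index_monomial_rev[of "map (\<lambda>k. p - k) ks" s] len assms(4) by (simp add: reflect_def)
    then have "[index_monomial s (reflect p ks) = - index_monomial s ks] (mod int p)"
      using index_monomial_complement_cong[OF len bounded[OF that]] assms(5) by simp
    then show ?thesis
      using that reflect_I[OF that] unfolding T_def I_def
      by (intro rat_cong_inverse_add assms(1) prime_not_dvd_index_monomial)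
  qed
  have sum_eq: "multiple_harmonic_sum R s (p - 1) = sum T I"
    unfolding multiple_harmonic_sum_def I_def T_def ..
  have reindex: "sum T I = (\<Sum>ks\<in>I. T (reflect p ks))"
    by (rule sum.reindex_bij_witness[where i="reflect p" and j="reflect p"])
       (auto simp: reflect_reflect bounded reflect_I)
  have "of_int 2 * multiple_harmonic_sum R s (p - 1) = (\<Sum>ks\<in>I. T ks + T (reflect p ks))"
    unfolding sum_eq using reindex by (simp add: sum.distrib)
  then have "rat_cong (of_int 2 * multiple_harmonic_sum R s (p - 1)) 0 p"
    using rat_cong_sum[OF assms(1) pair] by simp
  moreover have "\<not> int p dvd 2"
  proof
    assume "int p dvd 2"
    then have "p dvd 2"
      by (metis int_dvd_int_iff of_nat_numeral)
    then show False
      using primes_dvd_imp_eq[OF assms(1) two_is_prime_nat] assms(2) by auto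
  qed
  ultimately show ?thesis
    using rat_cong_mult_cancel assms(1) by blast
qed

theorem corollary3p4:
  fixes p :: nat and s :: "nat list"
  assumes "prime p" and "odd p"
    and "\<forall>x\<in>set s. x > 0"
    and "rev s = s"
    and "odd (sum_list s)"
  shows "rat_cong (H s (p - 1)) 0 p \<and> rat_cong (S s (p - 1)) 0 p"
proof -
  have "rat_cong (multiple_harmonic_sum (<) s (p - 1)) 0 p"
    by (rule multiple_harmonic_sum_reflection_cong_0) (use assms in auto)
  moreover have "rat_cong (multiple_harmonic_sum (\<le>) s (p - 1)) 0 p"
    by (rule multiple_harmonic_sum_reflection_cong_0) (use assms in auto)
  ultimately show ?thesis
    unfolding H_eq_multiple_harmonic_sum S_eq_multiple_harmonic_sum ..
qed

end
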